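(* Let $\mathcal K$ be an even normalized kernel. For any $\rho>0$, $\theta>0$ and $U\in\mathbb R$, consider the equations $$\sum_{i=1}^2w_i\Delta_j(u_i,\sigma)=\rho\,\Delta_j^{eq}(U,\sqrt\theta),\quad j=0,1,\dots,4,$$ for $W=(w_1,u_1,w_2,u_2,\sigma)\in\Omega^{tot}=\{W\in\mathbb R^5: w_1>0,w_2>0,u_1\le u_2,\sigma>0\}$. If $\mathfrak m_4<3$, the equations have no solution; if $\mathfrak m_4=3$, the solutions are exactly those with $u_1=u_2=U$, $\sigma=\sqrt\theta$ and $w_1+w_2=\rho$; if $\mathfrak m_4>3$, there is a unique solution, given by $$w_1=w_2=\frac\rho2,\quad u_{1,2}=U\mp\nu\sigma,\quad \sigma=\Big(\frac{\theta}{\nu^2+1}\Big)^{1/2},\quad \nu=\Big(\frac{\mathfrak m_4-3}{2}\Big)^{1/4}.$$ In particular, the equilibrium manifold is nonempty if and only if $\mathfrak m_4\ge3$.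
   Context: $\mathcal K:\mathbb R\to[0,\infty)$ is a kernel with $\mathfrak m_j:=\int_{\mathbb R}\xi^j\mathcal K(\xi)\,d\xi<\infty$ for all $j$, normalized: $\mathfrak m_0=1,\mathfrak m_1=0,\mathfrak m_2=1$. $\Delta_j(u,\sigma)=\int\xi^j\frac1\sigma\mathcal K(\frac{\xi-u}{\sigma})d\xi=\sum_{k=0}^j\binom jk\mathfrak m_k\sigma^ku^{j-k}$, and $\Delta^{eq}_j(u,s)=\int\xi^j\frac{1}{\sqrt{2\pi}s}e^{-(\xi-u)^2/(2s^2)}d\xi$. The equilibrium manifold is $\mathcal E=\{M\in\mathcal M(\Omega^{tot}): M_j=\rho\Delta^{eq}_j(U,\sqrt\theta),\ j=0,\dots,4\}$, where $\mathcal M(W)=(M_0,\dots,M_4)$ with $M_j=\sum_{i=1}^2w_i\Delta_j(u_i,\sigma)$, $\rho=M_0$, $U=M_1/M_0$, $\theta=(M_0M_2-M_1^2)/M_0^2$. *)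

theory Defs
  imports "HOL-Analysis.Analysis"
begin

definition kmoment :: "(real \<Rightarrow> real) \<Rightarrow> nat \<Rightarrow> real" where
  "kmoment K j = (LINT x|lborel. x ^ j * K x)"

definition normalized_kernel :: "(real \<Rightarrow> real) \<Rightarrow> bool" where
  "normalized_kernel K \<longleftrightarrow>
     (\<forall>x. 0 \<le> K x) \<and> K \<in> borel_measurable borel \<and>
     (\<forall>j. integrable lborel (\<lambda>x. x ^ j * K x)) \<and>
     kmoment K 0 = 1 \<and> kmoment K 1 = 0 \<and> kmoment K 2 = 1"

definition even_kernel :: "(real \<Rightarrow> real) \<Rightarrow> bool" where
  "even_kernel K \<longleftrightarrow> (\<forall>x. K (- x) = K x)"

definition Delta :: "(real \<Rightarrow> real) \<Rightarrow> nat \<Rightarrow> real \<Rightarrow> real \<Rightarrow> real" where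
  "Delta K j u \<sigma> = (LINT \<xi>|lborel. \<xi> ^ j * ((1 / \<sigma>) * K ((\<xi> - u) / \<sigma>)))"

definition Delta_eq :: "nat \<Rightarrow> real \<Rightarrow> real \<Rightarrow> real" where
  "Delta_eq j u s = (LINT \<xi>|lborel. \<xi> ^ j *
      (1 / (sqrt (2 * pi) * s) * exp (- ((\<xi> - u)\<^sup>2) / (2 * s\<^sup>2))))"

type_synonym param = "real \<times> real \<times> real \<times> real \<times> real"

definition Omega_tot :: "param set" where
  "Omega_tot = {(w1, u1, w2, u2, \<sigma>). w1 > 0 \<and> w2 > 0 \<and> u1 \<le> u2 \<and> \<sigma> > 0}"

definition Mj :: "(real \<Rightarrow> real) \<Rightarrow> param \<Rightarrow> nat \<Rightarrow> real" where
  "Mj K W j = (case W of (w1, u1, w2, u2, \<sigma>) \<Rightarrow> w1 * Delta K j u1 \<sigma> + w2 * Delta K j u2 \<sigma>)"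

definition Mvec :: "(real \<Rightarrow> real) \<Rightarrow> param \<Rightarrow> nat \<Rightarrow> real" where
  "Mvec K W = (\<lambda>j. if j \<le> 4 then Mj K W j else 0)"

definition eq_manifold :: "(real \<Rightarrow> real) \<Rightarrow> (nat \<Rightarrow> real) set" where
  "eq_manifold K = {M. M \<in> Mvec K ` Omega_tot \<and>
     (let \<rho> = M 0; U = M 1 / M 0; \<theta> = (M 0 * M 2 - (M 1)\<^sup>2) / (M 0)\<^sup>2
      in \<forall>j\<le>4. M j = \<rho> * Delta_eq j U (sqrt \<theta>))}"

definition solutions :: "(real \<Rightarrow> real) \<Rightarrow> real \<Rightarrow> real \<Rightarrow> real \<Rightarrow> param set" where
  "solutions K \<rho> U \<theta> = {W \<in> Omega_tot. \<forall>j\<le>4. Mj K W j = \<rho> * Delta_eq j U (sqrt \<theta>)}"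

end

theory Submission
  imports Defs "HOL-Probability.Distributions"
begin

text \<open>
  By an affine change of variables, \<open>\<Delta>\<^sub>j(u,\<sigma>)\<close> is the binomial transform in \<open>u\<close> of the
  scaled kernel moments, and the Gaussian moments are the kernel moments of the standard normal
  density, for which \<open>m\<^sub>4 = 3\<close>. Both sides of the moment equations therefore transform
  identically under translation, so one may take \<open>U = 0\<close>. For centred nodes \<open>a\<^sub>1 \<le> a\<^sub>2\<close>,
  the first and third equations force \<open>a\<^sub>1 = -a\<^sub>2\<close>, with equal weights unless both vanish;
  then the second equation reads \<open>d\<^sup>2 + \<sigma>\<^sup>2 = \<theta>\<close> and the fourth
  \<open>(m\<^sub>4 - 3) \<sigma>\<^sup>4 = 2 d\<^sup>4\<close>, which is solvable iff \<open>m\<^sub>4 \<ge> 3\<close> and then fixes \<open>d = \<nu> \<sigma>\<close>.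
  Points of the equilibrium manifold are exactly the moment vectors of such solutions.
\<close>

lemma binomial_expansion_times:
  fixes c y z :: "'a::comm_semiring_1"
  shows "(c + y) ^ n * z = (\<Sum>k\<le>n. of_nat (n choose k) * c ^ (n - k) * (y ^ k * z))"
proof -
  have "(c + y) ^ n = (\<Sum>k\<le>n. of_nat (n choose k) * y ^ k * c ^ (n - k))"
    by (subst add.commute) (rule binomial_ring)
  then show ?thesis
    by (simp add: sum_distrib_left sum_distrib_right mult_ac)
qed

lemma integrable_binomial:
  fixes f g :: "'a \<Rightarrow> real"
  assumes "\<And>k. k \<le> n \<Longrightarrow> integrable M (\<lambda>x. g x ^ k * f x)"
  shows "integrable M (\<lambda>x. (c + g x) ^ n * f x)"
  unfolding binomial_expansion_times
  by (intro Bochner_Integration.integrable_sum integrable_mult_right assms) simp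

lemma integral_binomial:
  fixes f g :: "'a \<Rightarrow> real"
  assumes "\<And>k. k \<le> n \<Longrightarrow> integrable M (\<lambda>x. g x ^ k * f x)"
  shows "(LINT x|M. (c + g x) ^ n * f x)
    = (\<Sum>k\<le>n. of_nat (n choose k) * c ^ (n - k) * (LINT x|M. g x ^ k * f x))"
  unfolding binomial_expansion_times using assms by (simp add: Bochner_Integration.integral_sum)

lemma Delta_lborel_affine:
  assumes "\<sigma> > 0"
  shows "Delta K j u \<sigma> = (LINT x|lborel. (u + \<sigma> * x) ^ j * K x)"
proof -
  have "Delta K j u \<sigma> = \<bar>\<sigma>\<bar> *\<^sub>R (LINT x|lborel. (u + \<sigma> * x) ^ j * ((1 / \<sigma>) * K (((u + \<sigma> * x) - u) / \<sigma>)))"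
    unfolding Delta_def by (rule lborel_integral_real_affine) (use assms in auto)
  then show ?thesis
    using assms by simp
qed

lemma Delta_zero: "\<sigma> > 0 \<Longrightarrow> Delta K j 0 \<sigma> = \<sigma> ^ j * kmoment K j"
  by (simp add: Delta_lborel_affine kmoment_def power_mult_distrib mult.assoc)

lemma Delta_translate:
  assumes "normalized_kernel K" "\<sigma> > 0"
  shows "Delta K j (c + u) \<sigma> = (\<Sum>k\<le>j. of_nat (j choose k) * c ^ (j - k) * Delta K k u \<sigma>)"
proof -
  have moments: "integrable lborel (\<lambda>x. (\<sigma> * x) ^ k * K x)" for k
    using assms(1) by (simp add: normalized_kernel_def power_mult_distrib mult.assoc)
  have "Delta K j (c + u) \<sigma> = (LINT x|lborel. (c + (u + \<sigma> * x)) ^ j * K x)"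
    using assms(2) by (simp add: Delta_lborel_affine add.assoc)
  also have "\<dots> = (\<Sum>k\<le>j. of_nat (j choose k) * c ^ (j - k) * (LINT x|lborel. (u + \<sigma> * x) ^ k * K x))"
    by (intro integral_binomial integrable_binomial moments)
  finally show ?thesis
    using assms(2) by (simp add: Delta_lborel_affine)
qed

lemma kmoment_odd_eq_0:
  assumes "even_kernel K" "odd j"
  shows "kmoment K j = 0"
proof -
  have "kmoment K j = \<bar>-1\<bar> *\<^sub>R (LINT x|lborel. (0 + (-1) * x) ^ j * K (0 + (-1) * x))"
    unfolding kmoment_def by (rule lborel_integral_real_affine) simp
  also have "\<dots> = - kmoment K j"
    using assms by (simp add: kmoment_def even_kernel_def)
  finally show ?thesis
    by simp
qed

lemma Delta_low_moments:
  assumes "normalized_kernel K" "even_kernel K" "\<sigma> > 0"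
  shows "Delta K 0 u \<sigma> = 1" "Delta K 1 u \<sigma> = u" "Delta K 2 u \<sigma> = u\<^sup>2 + \<sigma>\<^sup>2"
    "Delta K 3 u \<sigma> = u ^ 3 + 3 * u * \<sigma>\<^sup>2"
    "Delta K 4 u \<sigma> = u ^ 4 + 6 * u\<^sup>2 * \<sigma>\<^sup>2 + kmoment K 4 * \<sigma> ^ 4"
proof -
  have expansion: "Delta K j u \<sigma> = (\<Sum>k\<le>j. of_nat (j choose k) * u ^ (j - k) * \<sigma> ^ k * kmoment K k)" for j
    using Delta_translate[OF assms(1,3), of j u 0] by (simp add: Delta_zero assms(3) mult.assoc)
  have "kmoment K 0 = 1" "kmoment K (Suc 0) = 0" "kmoment K 2 = 1" "kmoment K 3 = 0"
    using assms(1) kmoment_odd_eq_0[OF assms(2)] by (auto simp: normalized_kernel_def)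
  then show "Delta K 0 u \<sigma> = 1" "Delta K 1 u \<sigma> = u" "Delta K 2 u \<sigma> = u\<^sup>2 + \<sigma>\<^sup>2"
    "Delta K 3 u \<sigma> = u ^ 3 + 3 * u * \<sigma>\<^sup>2"
    "Delta K 4 u \<sigma> = u ^ 4 + 6 * u\<^sup>2 * \<sigma>\<^sup>2 + kmoment K 4 * \<sigma> ^ 4"
    by (simp_all add: expansion eval_nat_numeral)
qed

lemma normalized_kernel_std_normal_density: "normalized_kernel std_normal_density"
proof -
  have "kmoment std_normal_density 0 = 1" "kmoment std_normal_density 1 = 0"
    "kmoment std_normal_density 2 = 1"
    using integral_std_normal_moment_even[of 0] integral_std_normal_moment_odd[of 0]
      integral_std_normal_moment_even[of 1]
    by (simp_all add: kmoment_def mult.commute)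
  then show ?thesis
    unfolding normalized_kernel_def using integrable_std_normal_moment by (simp add: mult.commute)
qed

lemma even_kernel_std_normal_density: "even_kernel std_normal_density"
  by (simp add: even_kernel_def std_normal_density_def)

lemma kmoment_std_normal_density_4: "kmoment std_normal_density 4 = 3"
  using integral_std_normal_moment_even[of 2] by (simp add: kmoment_def mult.commute fact_numeral)

lemma Delta_eq_eq_Delta_std_normal_density:
  assumes "s > 0"
  shows "Delta_eq j u s = Delta std_normal_density j u s"
  unfolding Delta_eq_def Delta_def std_normal_density_def
  using assms by (simp add: power_divide field_simps)

lemma Delta_eq_low_moments:
  assumes "s > 0"
  shows "Delta_eq 0 u s = 1" "Delta_eq 1 u s = u" "Delta_eq 2 u s = u\<^sup>2 + s\<^sup>2"
    "Delta_eq 3 u s = u ^ 3 + 3 * u * s\<^sup>2"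
    "Delta_eq 4 u s = u ^ 4 + 6 * u\<^sup>2 * s\<^sup>2 + 3 * s ^ 4"
  using Delta_low_moments[OF normalized_kernel_std_normal_density even_kernel_std_normal_density assms]
  by (simp_all add: Delta_eq_eq_Delta_std_normal_density assms kmoment_std_normal_density_4)

lemma Mj_translate:
  assumes "normalized_kernel K" "\<sigma> > 0"
  shows "Mj K (w1, c + u1, w2, c + u2, \<sigma>) j
    = (\<Sum>k\<le>j. of_nat (j choose k) * c ^ (j - k) * Mj K (w1, u1, w2, u2, \<sigma>) k)"
  by (simp add: Mj_def Delta_translate[OF assms] sum_distrib_left sum.distrib algebra_simps)

lemma solutions_translate:
  assumes K: "normalized_kernel K" and "\<theta> > 0"
    and sol: "(w1, u1, w2, u2, \<sigma>) \<in> solutions K \<rho> U \<theta>"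
  shows "(w1, c + u1, w2, c + u2, \<sigma>) \<in> solutions K \<rho> (c + U) \<theta>"
proof -
  have \<sigma>: "\<sigma> > 0" and s: "sqrt \<theta> > 0"
    using sol \<open>\<theta> > 0\<close> by (auto simp: solutions_def Omega_tot_def)
  have "Mj K (w1, c + u1, w2, c + u2, \<sigma>) j = \<rho> * Delta_eq j (c + U) (sqrt \<theta>)" if "j \<le> 4" for j
  proof -
    have "Mj K (w1, c + u1, w2, c + u2, \<sigma>) j
        = (\<Sum>k\<le>j. of_nat (j choose k) * c ^ (j - k) * (\<rho> * Delta_eq k U (sqrt \<theta>)))"
      unfolding Mj_translate[OF K \<sigma>] using sol that by (intro sum.cong) (auto simp: solutions_def)
    also have "\<dots> = \<rho> * Delta_eq j (c + U) (sqrt \<theta>)"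
      by (simp add: Delta_eq_eq_Delta_std_normal_density[OF s] sum_distrib_left mult_ac
          Delta_translate[OF normalized_kernel_std_normal_density s])
    finally show ?thesis .
  qed
  then show ?thesis
    using sol by (auto simp: solutions_def Omega_tot_def)
qed

lemma all_le_4_iff: "(\<forall>j\<le>4::nat. P j) \<longleftrightarrow> P 0 \<and> P 1 \<and> P 2 \<and> P 3 \<and> P 4"
  by (simp add: numeral_eq_Suc le_Suc_eq all_conj_distrib imp_disjL)

lemma mem_solutions_centered_iff:
  assumes K: "normalized_kernel K" "even_kernel K" and "\<theta> > 0"
  shows "(w1, a1, w2, a2, \<sigma>) \<in> solutions K \<rho> 0 \<theta> \<longleftrightarrow>
    0 < w1 \<and> 0 < w2 \<and> a1 \<le> a2 \<and> 0 < \<sigma> \<and>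
    w1 + w2 = \<rho> \<and>
    w1 * a1 + w2 * a2 = 0 \<and>
    w1 * (a1\<^sup>2 + \<sigma>\<^sup>2) + w2 * (a2\<^sup>2 + \<sigma>\<^sup>2) = \<rho> * \<theta> \<and>
    w1 * (a1 ^ 3 + 3 * a1 * \<sigma>\<^sup>2) + w2 * (a2 ^ 3 + 3 * a2 * \<sigma>\<^sup>2) = 0 \<and>
    w1 * (a1 ^ 4 + 6 * a1\<^sup>2 * \<sigma>\<^sup>2 + kmoment K 4 * \<sigma> ^ 4)
      + w2 * (a2 ^ 4 + 6 * a2\<^sup>2 * \<sigma>\<^sup>2 + kmoment K 4 * \<sigma> ^ 4) = \<rho> * (3 * \<theta>\<^sup>2)"
proof (cases "\<sigma> > 0")
  case True
  have s: "sqrt \<theta> > 0" "sqrt \<theta> ^ 2 = \<theta>" "sqrt \<theta> ^ 4 = \<theta>\<^sup>2"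
    using \<open>\<theta> > 0\<close> by (simp_all add: power4_eq_xxxx power2_eq_square)
  show ?thesis
    unfolding solutions_def Omega_tot_def all_le_4_iff
    using Delta_low_moments[OF K True] Delta_eq_low_moments[OF s(1)] s True
    by (simp add: Mj_def)
next
  case False
  then show ?thesis
    by (auto simp: solutions_def Omega_tot_def)
qed

lemma two_point_symmetric:
  fixes w1 w2 a1 a2 :: real
  assumes w: "0 < w1" "0 < w2" and "a1 \<le> a2"
    and first: "w1 * a1 + w2 * a2 = 0" and third: "w1 * a1 ^ 3 + w2 * a2 ^ 3 = 0"
  shows "a1 = - a2 \<and> (a2 = 0 \<or> w1 = w2)"
proof (cases "a1 = 0")
  case True
  then show ?thesis
    using first w by simp
next
  case False
  have "w1 * a1 * (a1\<^sup>2 - a2\<^sup>2) = (w1 * a1 ^ 3 + w2 * a2 ^ 3) - a2\<^sup>2 * (w1 * a1 + w2 * a2)"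
    by algebra
  then have "a1\<^sup>2 = a2\<^sup>2"
    using first third False w by simp
  moreover have "a1 \<noteq> a2"
  proof
    assume "a1 = a2"
    then have "(w1 + w2) * a1 = 0"
      using first by (simp add: algebra_simps)
    then show False
      using False w by simp
  qed
  ultimately have "a1 = - a2"
    by (auto simp: power2_eq_iff)
  moreover from this have "(w2 - w1) * a2 = 0"
    using first by (simp add: algebra_simps)
  ultimately show ?thesis
    by auto
qed

lemma two_point_moment_equations_iff:
  fixes w1 w2 a1 a2 \<sigma> \<rho> \<theta> m4 :: real
  assumes w: "0 < w1" "0 < w2" and "a1 \<le> a2"
  shows "(w1 + w2 = \<rho> \<and>
      w1 * a1 + w2 * a2 = 0 \<and>
      w1 * (a1\<^sup>2 + \<sigma>\<^sup>2) + w2 * (a2\<^sup>2 + \<sigma>\<^sup>2) = \<rho> * \<theta> \<and>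
      w1 * (a1 ^ 3 + 3 * a1 * \<sigma>\<^sup>2) + w2 * (a2 ^ 3 + 3 * a2 * \<sigma>\<^sup>2) = 0 \<and>
      w1 * (a1 ^ 4 + 6 * a1\<^sup>2 * \<sigma>\<^sup>2 + m4 * \<sigma> ^ 4)
        + w2 * (a2 ^ 4 + 6 * a2\<^sup>2 * \<sigma>\<^sup>2 + m4 * \<sigma> ^ 4) = \<rho> * (3 * \<theta>\<^sup>2))
    \<longleftrightarrow> (a1 = - a2 \<and> (a2 = 0 \<or> w1 = w2) \<and> w1 + w2 = \<rho> \<and>
      a2\<^sup>2 + \<sigma>\<^sup>2 = \<theta> \<and> (m4 - 3) * \<sigma> ^ 4 = 2 * a2 ^ 4)"
    (is "?moments \<longleftrightarrow> ?symmetric")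
proof
  assume ?moments
  then have mass: "w1 + w2 = \<rho>" and first: "w1 * a1 + w2 * a2 = 0"
    and second: "w1 * (a1\<^sup>2 + \<sigma>\<^sup>2) + w2 * (a2\<^sup>2 + \<sigma>\<^sup>2) = \<rho> * \<theta>"
    and third: "w1 * (a1 ^ 3 + 3 * a1 * \<sigma>\<^sup>2) + w2 * (a2 ^ 3 + 3 * a2 * \<sigma>\<^sup>2) = 0"
    and fourth: "w1 * (a1 ^ 4 + 6 * a1\<^sup>2 * \<sigma>\<^sup>2 + m4 * \<sigma> ^ 4)
        + w2 * (a2 ^ 4 + 6 * a2\<^sup>2 * \<sigma>\<^sup>2 + m4 * \<sigma> ^ 4) = \<rho> * (3 * \<theta>\<^sup>2)"
    by auto
  have "w1 * a1 ^ 3 + w2 * a2 ^ 3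
      = w1 * (a1 ^ 3 + 3 * a1 * \<sigma>\<^sup>2) + w2 * (a2 ^ 3 + 3 * a2 * \<sigma>\<^sup>2) - 3 * \<sigma>\<^sup>2 * (w1 * a1 + w2 * a2)"
    by algebra
  then have sym: "a1 = - a2" "a2 = 0 \<or> w1 = w2"
    using two_point_symmetric[OF w \<open>a1 \<le> a2\<close> first] first third by auto
  have "\<rho> > 0"
    using mass w by simp
  moreover have "\<rho> * (a2\<^sup>2 + \<sigma>\<^sup>2) = \<rho> * \<theta>"
    using second sym(1) by (simp add: mass[symmetric] algebra_simps)
  ultimately have variance: "a2\<^sup>2 + \<sigma>\<^sup>2 = \<theta>"
    by simp
  have "\<rho> * (a2 ^ 4 + 6 * a2\<^sup>2 * \<sigma>\<^sup>2 + m4 * \<sigma> ^ 4) = \<rho> * (3 * \<theta>\<^sup>2)"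
    using fourth sym(1) by (simp add: mass[symmetric] algebra_simps)
  with \<open>\<rho> > 0\<close> have "a2 ^ 4 + 6 * a2\<^sup>2 * \<sigma>\<^sup>2 + m4 * \<sigma> ^ 4 = 3 * (a2\<^sup>2 + \<sigma>\<^sup>2)\<^sup>2"
    using variance by simp
  then have "(m4 - 3) * \<sigma> ^ 4 = 2 * a2 ^ 4"
    by algebra
  then show ?symmetric
    using sym mass variance by simp
next
  assume ?symmetric
  then have sym: "a1 = - a2" and odd: "(w2 - w1) * a2 = 0" and mass: "\<rho> = w1 + w2"
    and variance: "\<theta> = a2\<^sup>2 + \<sigma>\<^sup>2" and kurtosis: "(m4 - 3) * \<sigma> ^ 4 = 2 * a2 ^ 4"
    by auto
  have "w1 * a1 + w2 * a2 = (w2 - w1) * a2"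
    and "w1 * (a1 ^ 3 + 3 * a1 * \<sigma>\<^sup>2) + w2 * (a2 ^ 3 + 3 * a2 * \<sigma>\<^sup>2)
      = (w2 - w1) * a2 * (a2\<^sup>2 + 3 * \<sigma>\<^sup>2)"
    and "w1 * (a1\<^sup>2 + \<sigma>\<^sup>2) + w2 * (a2\<^sup>2 + \<sigma>\<^sup>2) = (w1 + w2) * (a2\<^sup>2 + \<sigma>\<^sup>2)"
    and "w1 * (a1 ^ 4 + 6 * a1\<^sup>2 * \<sigma>\<^sup>2 + m4 * \<sigma> ^ 4) + w2 * (a2 ^ 4 + 6 * a2\<^sup>2 * \<sigma>\<^sup>2 + m4 * \<sigma> ^ 4)
      = (w1 + w2) * (a2 ^ 4 + 6 * a2\<^sup>2 * \<sigma>\<^sup>2 + m4 * \<sigma> ^ 4)"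
    unfolding sym by algebra+
  moreover have "a2 ^ 4 + 6 * a2\<^sup>2 * \<sigma>\<^sup>2 + m4 * \<sigma> ^ 4 = 3 * \<theta>\<^sup>2"
    unfolding variance using kurtosis by algebra
  ultimately show ?moments
    using odd by (simp add: mass variance)
qed

definition symmetric_solutions :: "real \<Rightarrow> real \<Rightarrow> real \<Rightarrow> real \<Rightarrow> param set" where
  "symmetric_solutions m4 \<rho> U \<theta> = {(w1, U - d, w2, U + d, \<sigma>) | w1 w2 d \<sigma>.
     0 < w1 \<and> 0 < w2 \<and> 0 < \<sigma> \<and> 0 \<le> d \<and> (d = 0 \<or> w1 = w2) \<and> w1 + w2 = \<rho> \<and>
     d\<^sup>2 + \<sigma>\<^sup>2 = \<theta> \<and> (m4 - 3) * \<sigma> ^ 4 = 2 * d ^ 4}"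

lemma mem_symmetric_solutions_iff:
  "(w1, U + a1, w2, U + a2, \<sigma>) \<in> symmetric_solutions m4 \<rho> U \<theta> \<longleftrightarrow>
    0 < w1 \<and> 0 < w2 \<and> 0 < \<sigma> \<and> 0 \<le> a2 \<and> a1 = - a2 \<and> (a2 = 0 \<or> w1 = w2) \<and> w1 + w2 = \<rho> \<and>
    a2\<^sup>2 + \<sigma>\<^sup>2 = \<theta> \<and> (m4 - 3) * \<sigma> ^ 4 = 2 * a2 ^ 4"
  unfolding symmetric_solutions_def by auto

lemma solutions_eq_symmetric_solutions:
  assumes K: "normalized_kernel K" "even_kernel K" and "\<theta> > 0"
  shows "solutions K \<rho> U \<theta> = symmetric_solutions (kmoment K 4) \<rho> U \<theta>"
proof -
  have shift: "(w1, U + a1, w2, U + a2, \<sigma>) \<in> solutions K \<rho> U \<theta>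
      \<longleftrightarrow> (w1, a1, w2, a2, \<sigma>) \<in> solutions K \<rho> 0 \<theta>" for w1 a1 w2 a2 \<sigma>
    using solutions_translate[OF K(1) \<open>\<theta> > 0\<close>, of w1 a1 w2 a2 \<sigma> \<rho> 0 U]
      solutions_translate[OF K(1) \<open>\<theta> > 0\<close>, of w1 "U + a1" w2 "U + a2" \<sigma> \<rho> U "- U"]
    by auto
  have centered: "(w1, U + a1, w2, U + a2, \<sigma>) \<in> solutions K \<rho> U \<theta>
      \<longleftrightarrow> (w1, U + a1, w2, U + a2, \<sigma>) \<in> symmetric_solutions (kmoment K 4) \<rho> U \<theta>" for w1 a1 w2 a2 \<sigma>
  proof -
    have "(w1, U + a1, w2, U + a2, \<sigma>) \<in> solutions K \<rho> U \<theta> \<longleftrightarrow>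
      0 < w1 \<and> 0 < w2 \<and> a1 \<le> a2 \<and> 0 < \<sigma> \<and>
      (a1 = - a2 \<and> (a2 = 0 \<or> w1 = w2) \<and> w1 + w2 = \<rho> \<and>
       a2\<^sup>2 + \<sigma>\<^sup>2 = \<theta> \<and> (kmoment K 4 - 3) * \<sigma> ^ 4 = 2 * a2 ^ 4)"
      unfolding shift mem_solutions_centered_iff[OF K \<open>\<theta> > 0\<close>]
      using two_point_moment_equations_iff[of w1 w2 a1 a2 \<rho> \<sigma> \<theta> "kmoment K 4"]
      by blast
    then show ?thesis
      unfolding mem_symmetric_solutions_iff by auto
  qed
  show ?thesis
  proof (rule set_eqI)
    fix W :: param
    obtain w1 u1 w2 u2 \<sigma> where "W = (w1, u1, w2, u2, \<sigma>)"
      by (cases W)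
    then show "W \<in> solutions K \<rho> U \<theta> \<longleftrightarrow> W \<in> symmetric_solutions (kmoment K 4) \<rho> U \<theta>"
      using centered[of w1 "u1 - U" w2 "u2 - U" \<sigma>] by simp
  qed
qed

lemma symmetric_solutions_subcritical:
  assumes "m4 < 3"
  shows "symmetric_solutions m4 \<rho> U \<theta> = {}"
proof -
  have "(m4 - 3) * \<sigma> ^ 4 < 2 * d ^ 4" if "0 < \<sigma>" for \<sigma> d :: real
  proof -
    have "(m4 - 3) * \<sigma> ^ 4 < 0"
      using assms that by (simp add: mult_neg_pos)
    also have "0 \<le> 2 * d ^ 4"
      by simp
    finally show ?thesis .
  qed
  then show ?thesis
    unfolding symmetric_solutions_def by fastforce
qed

lemma symmetric_solutions_critical:
  assumes "\<theta> > 0"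
  shows "symmetric_solutions 3 \<rho> U \<theta>
    = {(w1, U, w2, U, sqrt \<theta>) | w1 w2. 0 < w1 \<and> 0 < w2 \<and> w1 + w2 = \<rho>}"
proof -
  have "0 < \<sigma> \<and> \<sigma>\<^sup>2 = \<theta> \<longleftrightarrow> \<sigma> = sqrt \<theta>" for \<sigma>
    using assms by auto
  then show ?thesis
    unfolding symmetric_solutions_def by auto
qed

lemma symmetric_solutions_supercritical:
  assumes "3 < m4" "0 < \<rho>" "0 < \<theta>"
    and \<nu>_def: "\<nu> = ((m4 - 3) / 2) powr (1 / 4)"
    and \<sigma>_def: "\<sigma> = sqrt (\<theta> / (\<nu>\<^sup>2 + 1))"
  shows "symmetric_solutions m4 \<rho> U \<theta> = {(\<rho> / 2, U - \<nu> * \<sigma>, \<rho> / 2, U + \<nu> * \<sigma>, \<sigma>)}"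
proof -
  have \<nu>: "0 < \<nu>" "m4 - 3 = 2 * \<nu> ^ 4"
    using assms(1) by (simp_all add: \<nu>_def powr_power)
  have "0 < \<nu>\<^sup>2 + 1"
    by (simp add: add_nonneg_pos)
  then have \<sigma>: "0 < \<sigma>" "\<sigma>\<^sup>2 * (\<nu>\<^sup>2 + 1) = \<theta>"
    using assms(3) by (simp_all add: \<sigma>_def)
  have "(w1, U - d, w2, U + d, s) = (\<rho> / 2, U - \<nu> * \<sigma>, \<rho> / 2, U + \<nu> * \<sigma>, \<sigma>)"
    if "0 < w1" "0 < w2" "0 < s" "0 \<le> d" "d = 0 \<or> w1 = w2" "w1 + w2 = \<rho>"
      "d\<^sup>2 + s\<^sup>2 = \<theta>" "(m4 - 3) * s ^ 4 = 2 * d ^ 4" for w1 w2 d s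
  proof -
    have "d ^ 4 = (\<nu> * s) ^ 4"
      using that(8) \<nu>(2) by (simp add: power_mult_distrib)
    then have d: "d = \<nu> * s"
      by (rule power_eq_imp_eq_base) (use that \<nu> in auto)
    then have "s\<^sup>2 * (\<nu>\<^sup>2 + 1) = \<sigma>\<^sup>2 * (\<nu>\<^sup>2 + 1)"
      using that(7) \<sigma>(2) by (simp add: power_mult_distrib algebra_simps)
    then have "s = \<sigma>"
      using \<open>0 < \<nu>\<^sup>2 + 1\<close> that(3) \<sigma>(1) by (simp add: power2_eq_iff_nonneg)
    moreover have "w1 = w2"
      using that(3,5) d \<nu>(1) by auto
    ultimately show ?thesis
      using d that(6) by auto
  qed
  moreover have "(\<rho> / 2, U - \<nu> * \<sigma>, \<rho> / 2, U + \<nu> * \<sigma>, \<sigma>) \<in> symmetric_solutions m4 \<rho> U \<theta>"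
    unfolding symmetric_solutions_def
    using assms(2) \<nu> \<sigma> by (auto simp: power_mult_distrib algebra_simps intro!: exI[of _ "\<rho> / 2"])
  ultimately show ?thesis
    unfolding symmetric_solutions_def by blast
qed

lemma mem_eq_manifold_iff:
  "M \<in> eq_manifold K \<longleftrightarrow> M \<in> Mvec K ` Omega_tot \<and>
    (\<forall>j\<le>4. M j = M 0 * Delta_eq j (M 1 / M 0) (sqrt ((M 0 * M 2 - (M 1)\<^sup>2) / (M 0)\<^sup>2)))"
  by (simp only: eq_manifold_def Let_def mem_Collect_eq)

lemma Mvec_mem_eq_manifold:
  assumes "W \<in> solutions K \<rho> U \<theta>" "0 < \<rho>" "0 < \<theta>"
  shows "Mvec K W \<in> eq_manifold K"
proof -
  define M where "M = Mvec K W"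
  have M: "M j = \<rho> * Delta_eq j U (sqrt \<theta>)" if "j \<le> 4" for j
    using assms(1) that by (simp add: M_def Mvec_def solutions_def)
  have "sqrt \<theta> > 0"
    using assms(3) by simp
  then have M012: "M 0 = \<rho>" "M 1 = \<rho> * U" "M 2 = \<rho> * (U\<^sup>2 + \<theta>)"
    using M[of 0] M[of 1] M[of 2] Delta_eq_low_moments[of "sqrt \<theta>" U] assms(3) by simp_all
  have mean: "\<rho> * U / \<rho> = U" and temperature: "(\<rho> * (\<rho> * (U\<^sup>2 + \<theta>)) - (\<rho> * U)\<^sup>2) / \<rho>\<^sup>2 = \<theta>"
    using assms(2) by (simp_all add: field_simps power2_eq_square)
  have "M \<in> Mvec K ` Omega_tot"
    using assms(1) by (simp add: M_def solutions_def)
  moreover have "\<forall>j\<le>4. M j = M 0 * Delta_eq j (M 1 / M 0) (sqrt ((M 0 * M 2 - (M 1)\<^sup>2) / (M 0)\<^sup>2))"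
    unfolding M012 mean temperature using M by blast
  ultimately show ?thesis
    unfolding M_def[symmetric] mem_eq_manifold_iff by (rule conjI)
qed

lemma eq_manifold_imp_solutions:
  assumes K: "normalized_kernel K" "even_kernel K" and "M \<in> eq_manifold K"
  obtains W \<rho> U \<theta> where "0 < \<rho>" "0 < \<theta>" "W \<in> solutions K \<rho> U \<theta>"
proof -
  define \<theta> where "\<theta> = (M 0 * M 2 - (M 1)\<^sup>2) / (M 0)\<^sup>2"
  have image: "M \<in> Mvec K ` Omega_tot"
    and eqs: "\<forall>j\<le>4. M j = M 0 * Delta_eq j (M 1 / M 0) (sqrt \<theta>)"
    using assms(3) unfolding mem_eq_manifold_iff \<theta>_def by blast+
  from image obtain w1 u1 w2 u2 \<sigma> where W: "(w1, u1, w2, u2, \<sigma>) \<in> Omega_tot"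
    and M: "M = Mvec K (w1, u1, w2, u2, \<sigma>)"
    by (metis imageE prod_cases5)
  then have pos: "0 < w1" "0 < w2" "0 < \<sigma>"
    by (auto simp: Omega_tot_def)
  have M012: "M 0 = w1 + w2" "M 1 = w1 * u1 + w2 * u2"
    "M 2 = w1 * (u1\<^sup>2 + \<sigma>\<^sup>2) + w2 * (u2\<^sup>2 + \<sigma>\<^sup>2)"
    using Delta_low_moments[OF K pos(3)] by (simp_all add: M Mvec_def Mj_def)
  have "M 0 > 0"
    using pos by (simp add: M012)
  moreover have "\<theta> > 0"
  proof -
    have "M 0 * M 2 - (M 1)\<^sup>2 = (w1 + w2)\<^sup>2 * \<sigma>\<^sup>2 + w1 * w2 * (u1 - u2)\<^sup>2"
      unfolding M012 by algebra
    also have "\<dots> > 0"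
      using pos by (simp add: add_pos_nonneg)
    finally show ?thesis
      using \<open>M 0 > 0\<close> by (simp add: \<theta>_def)
  qed
  moreover have "(w1, u1, w2, u2, \<sigma>) \<in> solutions K (M 0) (M 1 / M 0) \<theta>"
    unfolding solutions_def mem_Collect_eq
  proof (intro conjI allI impI)
    fix j :: nat
    assume "j \<le> 4"
    then have "Mj K (w1, u1, w2, u2, \<sigma>) j = M j"
      by (simp add: M Mvec_def)
    also have "\<dots> = M 0 * Delta_eq j (M 1 / M 0) (sqrt \<theta>)"
      using eqs \<open>j \<le> 4\<close> by blast
    finally show "Mj K (w1, u1, w2, u2, \<sigma>) j = M 0 * Delta_eq j (M 1 / M 0) (sqrt \<theta>)" .
  qed (rule W)
  ultimately show ?thesis
    by (rule that)
qed

lemma eq_manifold_nonempty_iff: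
  assumes K: "normalized_kernel K" "even_kernel K"
  shows "eq_manifold K \<noteq> {} \<longleftrightarrow> 3 \<le> kmoment K 4"
proof
  assume "eq_manifold K \<noteq> {}"
  then obtain W \<rho> U \<theta> where "0 < \<theta>" "W \<in> solutions K \<rho> U \<theta>"
    using eq_manifold_imp_solutions[OF K] by blast
  then have "symmetric_solutions (kmoment K 4) \<rho> U \<theta> \<noteq> {}"
    using solutions_eq_symmetric_solutions[OF K, of \<theta> \<rho> U] by auto
  then have "\<not> kmoment K 4 < 3"
    using symmetric_solutions_subcritical by blast
  then show "3 \<le> kmoment K 4"
    by simp
next
  assume "3 \<le> kmoment K 4"
  have "symmetric_solutions (kmoment K 4) 1 0 1 \<noteq> {}"
  proof (cases "kmoment K 4 = 3")
    case True
    have "(1 / 2, 0, 1 / 2, 0, sqrt 1) \<in> symmetric_solutions 3 1 0 1"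
      unfolding symmetric_solutions_critical[OF zero_less_one] by (intro CollectI exI[of _ "1 / 2"] conjI) auto
    then show ?thesis
      using True by auto
  next
    case False
    then show ?thesis
      using \<open>3 \<le> kmoment K 4\<close> symmetric_solutions_supercritical[of "kmoment K 4" 1 1] by auto
  qed
  then obtain W where "W \<in> solutions K 1 0 1"
    using solutions_eq_symmetric_solutions[OF K, of 1 1 0] by auto
  then have "Mvec K W \<in> eq_manifold K"
    by (rule Mvec_mem_eq_manifold) simp_all
  then show "eq_manifold K \<noteq> {}"
    by blast
qed

theorem proposition5p1:
  fixes K :: "real \<Rightarrow> real" and \<rho> \<theta> U :: real
  assumes "normalized_kernel K" and "even_kernel K"
    and "\<rho> > 0" and "\<theta> > 0"
  shows "(kmoment K 4 < 3 \<longrightarrow> solutions K \<rho> U \<theta> = {})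
    \<and> (kmoment K 4 = 3 \<longrightarrow> solutions K \<rho> U \<theta> =
          {(w1, U, w2, U, sqrt \<theta>) | w1 w2. w1 > 0 \<and> w2 > 0 \<and> w1 + w2 = \<rho>})
    \<and> (kmoment K 4 > 3 \<longrightarrow>
          (let \<nu> = ((kmoment K 4 - 3) / 2) powr (1 / 4);
               \<sigma> = sqrt (\<theta> / (\<nu>\<^sup>2 + 1))
           in solutions K \<rho> U \<theta> = {(\<rho> / 2, U - \<nu> * \<sigma>, \<rho> / 2, U + \<nu> * \<sigma>, \<sigma>)}))
    \<and> (eq_manifold K \<noteq> {} \<longleftrightarrow> kmoment K 4 \<ge> 3)"
proof -
  have "solutions K \<rho> U \<theta> = symmetric_solutions (kmoment K 4) \<rho> U \<theta>"
    by (rule solutions_eq_symmetric_solutions[OF assms(1,2,4)])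
  then show ?thesis
    unfolding Let_def
    using symmetric_solutions_subcritical[of "kmoment K 4" \<rho> U \<theta>]
      symmetric_solutions_critical[OF assms(4), of \<rho> U]
      symmetric_solutions_supercritical[OF _ assms(3,4) refl refl, of "kmoment K 4" U]
      eq_manifold_nonempty_iff[OF assms(1,2)]
    by simp
qed

end
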